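(* In the call-by-name $\lambda$-calculus, $\approx^n_A=\approx^n_2=\cong^n=\simeq^n=\approx^n_1$.
   Context: $\Lambda^\bullet$ is the set of closed $\lambda$-terms. Contexts are generated by $C::=x\mid[\cdot]\mid C\,C\mid\lambda x.C$, possibly with several holes numbered left to right; $C[\widetilde M]$ fills the $i$-th hole with $M_i$; $C[M]$ fills every hole with $M$. For $\mathcal{R}\subseteq\Lambda^\bullet\times\Lambda^\bullet$, $\mathcal{R}^\star=\{(C[\widetilde M],C[\widetilde N]) : C\text{ a context},\ M_i\,\mathcal{R}\,N_i\ \forall i,\ C[\widetilde M],C[\widetilde N]\in\Lambda^\bullet\}$. Call-by-name reduction on closed terms: $MN\longrightarrow M'N$ if $M\longrightarrow M'$, and $(\lambda x.P)N\longrightarrow P[N/x]$; $\Longrightarrow$ is its reflexive transitive closure; $M{\Downarrow}$ means $M\Longrightarrow\lambda x.P$ for some closed abstraction. $M\simeq^n N$ iff for all contexts $C$ with $C[M],C[N]$ closed, $C[M]{\Downarrow}\iff C[N]{\Downarrow}$. Evaluation contexts $\mathcal{E}::=[\cdot]\mid\mathcal{E}\,M$ ($M\in\Lambda^\bullet$); $M\cong^n N$ iff for all $\mathcal{E}$, $\mathcal{E}[M]{\Downarrow}\iff\mathcal{E}[N]{\Downarrow}$. A relation $\mathcal{R}$ on $\Lambda^\bullet$ is an applicative bisimulation if $M\,\mathcal{R}\,N$ implies: whenever $M\Longrightarrow\lambda x.P$, then $N\Longrightarrow\lambda x.Q$ for some $Q$ with $P[W/x]\,\mathcal{R}\,Q[W/x]$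 for all $W\in\Lambda^\bullet$, and conversely; $\approx^n_A$ is the union of all applicative bisimulations. A coupled relation is a pair $(\mathcal{R}_1,\mathcal{R}_2)$ of relations on $\Lambda^\bullet$ with $\mathcal{R}_1\subseteq\mathcal{R}_2$; it is a (call-by-name) coupled logical bisimulation if whenever $M\,\mathcal{R}_2\,N$: (1) if $M\longrightarrow M'$ then there is $N'$ with $N\Longrightarrow N'$ and $M'\,\mathcal{R}_2\,N'$; (2) if $M=\lambda x.M'$ then $N\Longrightarrow\lambda x.N'$ for some $N'$ and for all $P,Q\in\Lambda^\bullet$ with $P\,\mathcal{R}_1^\star\,Q$, $M'[P/x]\,\mathcal{R}_2\,N'[Q/x]$; (3) the converses with $M$ and $N$ exchanged. $(\approx^n_1,\approx^n_2)$ is the componentwise union of all such bisimulations. *)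

theory Defs
  imports Main
begin

type_synonym var = nat

datatype lterm = Var var | App lterm lterm | Lam var lterm

fun fv :: "lterm \<Rightarrow> var set" where
  "fv (Var x) = {x}"
| "fv (App M N) = fv M \<union> fv N"
| "fv (Lam x M) = fv M - {x}"

definition closed :: "lterm \<Rightarrow> bool" where
  "closed M \<longleftrightarrow> fv M = {}"

text \<open>Substitution P[N/x]. It is only ever used with a closed N, in which case
  the naive definition is capture-avoiding.\<close>
fun subst :: "lterm \<Rightarrow> var \<Rightarrow> lterm \<Rightarrow> lterm" where
  "subst (Var y) x N = (if y = x then N else Var y)"
| "subst (App P Q) x N = App (subst P x N) (subst Q x N)"
| "subst (Lam y P) x N = (if y = x then Lam y P else Lam y (subst P x N))"

datatype ctx = CVar var | Hole | CApp ctx ctx | CLam var ctx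

fun nholes :: "ctx \<Rightarrow> nat" where
  "nholes (CVar x) = 0"
| "nholes Hole = 1"
| "nholes (CApp C D) = nholes C + nholes D"
| "nholes (CLam x C) = nholes C"

text \<open>C[M_1,...,M_n]: the i-th hole (left to right) is filled with the i-th list element.\<close>
fun fill :: "ctx \<Rightarrow> lterm list \<Rightarrow> lterm" where
  "fill (CVar x) Ms = Var x"
| "fill Hole Ms = hd Ms"
| "fill (CApp C D) Ms = App (fill C (take (nholes C) Ms)) (fill D (drop (nholes C) Ms))"
| "fill (CLam x C) Ms = Lam x (fill C Ms)"

definition plug :: "ctx \<Rightarrow> lterm \<Rightarrow> lterm" where
  "plug C M = fill C (replicate (nholes C) M)"

definition ctx_closure :: "lterm rel \<Rightarrow> lterm rel" where
  "ctx_closure R = {(fill C Ms, fill C Ns) | C Ms Ns.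
      length Ms = nholes C \<and> length Ns = nholes C \<and>
      (\<forall>i < nholes C. (Ms ! i, Ns ! i) \<in> R) \<and>
      closed (fill C Ms) \<and> closed (fill C Ns)}"

inductive red :: "lterm \<Rightarrow> lterm \<Rightarrow> bool" where
  red_app: "red M M' \<Longrightarrow> red (App M N) (App M' N)"
| red_beta: "red (App (Lam x P) N) (subst P x N)"

definition reds :: "lterm \<Rightarrow> lterm \<Rightarrow> bool" where
  "reds = red\<^sup>*\<^sup>*"

definition conv :: "lterm \<Rightarrow> bool" where
  "conv M \<longleftrightarrow> (\<exists>x P. reds M (Lam x P))"

definition ctx_equiv :: "lterm rel" where
  "ctx_equiv = {(M, N). closed M \<and> closed N \<and>
     (\<forall>C. closed (plug C M) \<and> closed (plug C N) \<longrightarrow> (conv (plug C M) \<longleftrightarrow> conv (plug C N)))}"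

text \<open>Evaluation contexts [.] M_1 ... M_k, with closed M_i, represented by the argument list.\<close>
definition eval_equiv :: "lterm rel" where
  "eval_equiv = {(M, N). closed M \<and> closed N \<and>
     (\<forall>As. (\<forall>A\<in>set As. closed A) \<longrightarrow> (conv (foldl App M As) \<longleftrightarrow> conv (foldl App N As)))}"

definition rel_on_closed :: "lterm rel \<Rightarrow> bool" where
  "rel_on_closed R \<longleftrightarrow> (\<forall>(M, N)\<in>R. closed M \<and> closed N)"

text \<open>Applicative bisimulation (abstractions are compared up to the choice of bound name).\<close>
definition app_bisim :: "lterm rel \<Rightarrow> bool" where
  "app_bisim R \<longleftrightarrow> rel_on_closed R \<and>
    (\<forall>(M, N)\<in>R.
      (\<forall>x P. reds M (Lam x P) \<longrightarrow> (\<exists>y Q. reds N (Lam y Q) \<and>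
          (\<forall>W. closed W \<longrightarrow> (subst P x W, subst Q y W) \<in> R))) \<and>
      (\<forall>y Q. reds N (Lam y Q) \<longrightarrow> (\<exists>x P. reds M (Lam x P) \<and>
          (\<forall>W. closed W \<longrightarrow> (subst P x W, subst Q y W) \<in> R))))"

definition app_bisimilar :: "lterm rel" where
  "app_bisimilar = \<Union>{R. app_bisim R}"

definition coupled_lb :: "lterm rel \<Rightarrow> lterm rel \<Rightarrow> bool" where
  "coupled_lb R1 R2 \<longleftrightarrow> rel_on_closed R1 \<and> rel_on_closed R2 \<and> R1 \<subseteq> R2 \<and>
    (\<forall>(M, N)\<in>R2.
      (\<forall>M'. red M M' \<longrightarrow> (\<exists>N'. reds N N' \<and> (M', N') \<in> R2)) \<and>
      (\<forall>x M'. M = Lam x M' \<longrightarrow> (\<exists>y N'. reds N (Lam y N') \<and>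
          (\<forall>P Q. closed P \<and> closed Q \<and> (P, Q) \<in> ctx_closure R1 \<longrightarrow>
             (subst M' x P, subst N' y Q) \<in> R2))) \<and>
      (\<forall>N'. red N N' \<longrightarrow> (\<exists>M'. reds M M' \<and> (M', N') \<in> R2)) \<and>
      (\<forall>y N'. N = Lam y N' \<longrightarrow> (\<exists>x M'. reds M (Lam x M') \<and>
          (\<forall>P Q. closed P \<and> closed Q \<and> (P, Q) \<in> ctx_closure R1 \<longrightarrow>
             (subst M' x P, subst N' y Q) \<in> R2))))"

definition lb1 :: "lterm rel" where
  "lb1 = \<Union>{R1. \<exists>R2. coupled_lb R1 R2}"

definition lb2 :: "lterm rel" where
  "lb2 = \<Union>{R2. \<exists>R1. coupled_lb R1 R2}"

end

theory Submission
  imports Defs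
begin

(* Everything is reduced to applicative similarity, the largest
   simulation (one half of an applicative bisimulation).
   1. Basic facts on free variables, substitution and the deterministic
      call-by-name reduction.
   2. Similarity is reflexive, transitive and invariant under reduction.
   3. Howe's method: the Howe closure of the open extension of similarity is
      substitutive and preserved by reduction, hence restricted to closed terms
      it is a simulation; therefore similarity is a congruence (closed under
      multi-hole contexts).
   4. The evaluation-context preorder coincides with similarity, so evaluation
      equivalence is mutual similarity; by determinism mutual similarity is an
      applicative bisimulation, so it equals applicative bisimilarity.
   5. Contextual equivalence equals evaluation equivalence (evaluation
      contexts are contexts; similarity is a congruence).
   6. Every coupled logical bisimulation is an applicative bisimulation, and by
      congruence (evaluation equivalence, evaluation equivalence) is a coupled
      logical bisimulation; this closes the chain of inclusions. *)

lemma fv_subst_subset: "fv (subst P x N) \<subseteq> (fv P - {x}) \<union> fv N"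
  by (induction P) auto

lemma fv_subst_closed: "closed N \<Longrightarrow> fv (subst P x N) = fv P - {x}"
  by (induction P) (auto simp: closed_def)

lemma subst_fresh: "x \<notin> fv M \<Longrightarrow> subst M x W = M"
  by (induction M) auto

lemma finite_fv: "finite (fv M)"
  by (induction M) auto

lemma closed_subst: "closed (Lam x P) \<Longrightarrow> closed W \<Longrightarrow> closed (subst P x W)"
  using fv_subst_closed[of W P x] by (auto simp: closed_def)

lemma fv_foldl_App: "fv (foldl App M As) = fv M \<union> (\<Union>A\<in>set As. fv A)"
  by (induction As arbitrary: M) auto

lemma red_fv: "red M M' \<Longrightarrow> fv M' \<subseteq> fv M"
proof (induction rule: red.induct)
  case (red_beta x P N)
  then show ?case using fv_subst_subset[of P x N] by auto
qed auto

lemma reds_closed: "reds M M' \<Longrightarrow> closed M \<Longrightarrow> closed M'"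
  unfolding reds_def closed_def
  by (induction rule: rtranclp_induct) (use red_fv in blast)+

lemma reds_refl: "reds M M"
  unfolding reds_def by simp

lemma reds_trans: "reds M M' \<Longrightarrow> reds M' M'' \<Longrightarrow> reds M M''"
  unfolding reds_def by (meson rtranclp_trans)

lemma red_reds: "red M M' \<Longrightarrow> reds M M'"
  unfolding reds_def by simp

lemma reds_App: "reds M M' \<Longrightarrow> reds (App M A) (App M' A)"
  unfolding reds_def
  by (induction rule: rtranclp_induct) (auto intro: rtranclp.rtrancl_into_rtrancl red_app)

lemma reds_foldl_App: "reds M M' \<Longrightarrow> reds (foldl App M As) (foldl App M' As)"
  by (induction As arbitrary: M M') (auto simp: reds_App)

lemma reds_beta: "reds M (Lam x P) \<Longrightarrow> reds (App M A) (subst P x A)"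
  using reds_App[of M "Lam x P" A] red_beta[of x P A] reds_trans red_reds by blast

lemma no_red_Lam: "\<not> red (Lam x P) M"
  by (auto elim: red.cases)

lemma reds_Lam: "reds (Lam x P) V \<Longrightarrow> V = Lam x P"
  unfolding reds_def by (auto elim: converse_rtranclpE simp: no_red_Lam)

lemma red_det: "red M M1 \<Longrightarrow> red M M2 \<Longrightarrow> M1 = M2"
proof (induction arbitrary: M2 rule: red.induct)
  case (red_app M M' N)
  from red_app.prems show ?case
    by (cases rule: red.cases) (use red_app no_red_Lam in auto)
next
  case (red_beta x P N)
  then show ?case by (cases rule: red.cases) (auto simp: no_red_Lam)
qed

lemma reds_to_normal: "reds M M' \<Longrightarrow> reds M V \<Longrightarrow> (\<And>W. \<not> red V W) \<Longrightarrow> reds M' V"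
  unfolding reds_def
proof (induction arbitrary: V rule: converse_rtranclp_induct)
  case (step M M1)
  from step.prems(1) show ?case
  proof (cases rule: converse_rtranclpE)
    case base
    then show ?thesis using step.hyps(1) step.prems(2) by auto
  next
    case (step M2)
    then have "M2 = M1" using red_det \<open>red M M1\<close> by auto
    then show ?thesis using step step.IH step.prems(2) by auto
  qed
qed simp

lemma reds_to_Lam: "reds M M' \<Longrightarrow> reds M (Lam x P) \<Longrightarrow> reds M' (Lam x P)"
  using reds_to_normal no_red_Lam by blast

lemma Lam_unique: "reds M (Lam x P) \<Longrightarrow> reds M (Lam y Q) \<Longrightarrow> x = y \<and> P = Q"
  using reds_to_Lam reds_Lam by blast

lemma conv_reds_iff: "reds M M' \<Longrightarrow> conv M \<longleftrightarrow> conv M'"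
  unfolding conv_def using reds_to_Lam reds_trans by blast

section \<open>Applicative similarity\<close>

definition simulation :: "lterm rel \<Rightarrow> bool" where
  "simulation R \<longleftrightarrow> rel_on_closed R \<and>
    (\<forall>(M, N)\<in>R. \<forall>x P. reds M (Lam x P) \<longrightarrow> (\<exists>y Q. reds N (Lam y Q) \<and>
          (\<forall>W. closed W \<longrightarrow> (subst P x W, subst Q y W) \<in> R)))"

definition similarity :: "lterm rel" where
  "similarity = \<Union>{R. simulation R}"

lemma simulationI:
  assumes "\<And>M N. (M, N) \<in> R \<Longrightarrow> closed M \<and> closed N"
    and "\<And>M N x P. (M, N) \<in> R \<Longrightarrow> reds M (Lam x P) \<Longrightarrow> \<exists>y Q. reds N (Lam y Q) \<and>
          (\<forall>W. closed W \<longrightarrow> (subst P x W, subst Q y W) \<in> R)"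
  shows "simulation R"
  using assms unfolding simulation_def rel_on_closed_def by blast

lemma simulation_similarity: "simulation R \<Longrightarrow> R \<subseteq> similarity"
  unfolding similarity_def by blast

lemma similarity_closed: "(M, N) \<in> similarity \<Longrightarrow> closed M \<and> closed N"
  unfolding similarity_def simulation_def rel_on_closed_def by blast

lemma similarity_step:
  assumes "(M, N) \<in> similarity" "reds M (Lam x P)"
  shows "\<exists>y Q. reds N (Lam y Q) \<and> (\<forall>W. closed W \<longrightarrow> (subst P x W, subst Q y W) \<in> similarity)"
proof -
  obtain R where R: "simulation R" "(M, N) \<in> R"
    using assms(1) unfolding similarity_def by blast
  then show ?thesis
    using assms(2) simulation_similarity[OF R(1)] unfolding simulation_def by fastforce
qed

lemma similarity_conv: "(M, N) \<in> similarity \<Longrightarrow> conv M \<Longrightarrow> conv N"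
  unfolding conv_def using similarity_step by blast

lemma similarity_trans: "(M, N) \<in> similarity \<Longrightarrow> (N, L) \<in> similarity \<Longrightarrow> (M, L) \<in> similarity"
proof -
  have "simulation (similarity O similarity)"
  proof (rule simulationI)
    fix M L x P assume "(M, L) \<in> similarity O similarity" "reds M (Lam x P)"
    then obtain N where MN: "(M, N) \<in> similarity" and NL: "(N, L) \<in> similarity" by blast
    obtain y Q where q: "reds N (Lam y Q)"
        "\<forall>W. closed W \<longrightarrow> (subst P x W, subst Q y W) \<in> similarity"
      using similarity_step[OF MN \<open>reds M (Lam x P)\<close>] by blast
    obtain z S where "reds L (Lam z S)"
        "\<forall>W. closed W \<longrightarrow> (subst Q y W, subst S z W) \<in> similarity"
      using similarity_step[OF NL q(1)] by blast
    then show "\<exists>z S. reds L (Lam z S) \<and>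
      (\<forall>W. closed W \<longrightarrow> (subst P x W, subst S z W) \<in> similarity O similarity)"
      using q(2) by blast
  qed (use similarity_closed in blast)
  then show "(M, N) \<in> similarity \<Longrightarrow> (N, L) \<in> similarity \<Longrightarrow> (M, L) \<in> similarity"
    using simulation_similarity by blast
qed

text \<open>A closed term and any of its reducts are similar in both directions
  (determinism makes them converge to the same abstraction); in particular
  similarity is reflexive.\<close>

lemma similarity_reds:
  assumes "reds M M'" "closed M"
  shows "(M, M') \<in> similarity \<and> (M', M) \<in> similarity"
proof -
  let ?R = "{(M, M'). closed M \<and> closed M' \<and> (reds M M' \<or> reds M' M)}"
  have "simulation ?R"
  proof (rule simulationI)
    fix M M' x P assume "(M, M') \<in> ?R" and r: "reds M (Lam x P)"
    then have c: "closed M" "reds M M' \<or> reds M' M" by auto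
    have r': "reds M' (Lam x P)"
      using c(2) reds_to_Lam[OF _ r] reds_trans[OF _ r] by blast
    have "(subst P x W, subst P x W) \<in> ?R" if "closed W" for W
      using closed_subst[OF reds_closed[OF r c(1)] that] reds_refl by blast
    then show "\<exists>y Q. reds M' (Lam y Q) \<and> (\<forall>W. closed W \<longrightarrow> (subst P x W, subst Q y W) \<in> ?R)"
      using r' by blast
  qed blast
  moreover have "(M, M') \<in> ?R" "(M', M) \<in> ?R"
    using assms reds_closed[OF assms] by auto
  ultimately show ?thesis
    using simulation_similarity by blast
qed

lemma similarity_refl: "closed M \<Longrightarrow> (M, M) \<in> similarity"
  using similarity_reds reds_refl by blast

lemma similarity_reds_left:
  assumes "(M, N) \<in> similarity" "reds M M'"
  shows "(M', N) \<in> similarity"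
proof -
  have "(M', M) \<in> similarity"
    using similarity_reds[OF assms(2)] similarity_closed[OF assms(1)] by blast
  then show ?thesis using similarity_trans assms(1) by blast
qed

fun substs :: "(var \<times> lterm) list \<Rightarrow> lterm \<Rightarrow> lterm" where
  "substs [] M = M"
| "substs ((x, W) # ps) M = substs ps (subst M x W)"

definition closing :: "(var \<times> lterm) list \<Rightarrow> bool" where
  "closing ps \<longleftrightarrow> (\<forall>p\<in>set ps. closed (snd p))"

lemma closing_simps [simp]:
  "closing []"
  "closing ((x, W) # ps) \<longleftrightarrow> closed W \<and> closing ps"
  "closing (ps @ qs) \<longleftrightarrow> closing ps \<and> closing qs"
  unfolding closing_def by auto

lemma fv_substs: "closing ps \<Longrightarrow> fv (substs ps M) = fv M - fst ` set ps"
proof (induction ps arbitrary: M)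
  case (Cons p ps)
  then show ?case by (cases p) (auto simp: fv_subst_closed)
qed simp

lemma substs_App [simp]: "substs ps (App M N) = App (substs ps M) (substs ps N)"
  by (induction ps arbitrary: M N) auto

lemma substs_Lam: "x \<notin> fst ` set ps \<Longrightarrow> substs ps (Lam x M) = Lam x (substs ps M)"
  by (induction ps arbitrary: M) auto

lemma substs_fresh: "fv M \<inter> fst ` set ps = {} \<Longrightarrow> closing ps \<Longrightarrow> substs ps M = M"
  by (induction ps arbitrary: M) (auto simp: subst_fresh)

lemma substs_closed: "closed M \<Longrightarrow> closing ps \<Longrightarrow> substs ps M = M"
  using substs_fresh unfolding closed_def by auto

lemma substs_append: "substs (ps @ qs) M = substs qs (substs ps M)"
  by (induction ps arbitrary: M) auto

definition cover :: "var set \<Rightarrow> (var \<times> lterm) list" where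
  "cover S = map (\<lambda>v. (v, Lam 0 (Var 0))) (sorted_list_of_set S)"

lemma closing_cover: "closing (cover S)"
  unfolding cover_def closing_def closed_def by auto

lemma cover_vars: "finite S \<Longrightarrow> fst ` set (cover S) = S"
  unfolding cover_def by (simp add: image_image)

definition open_sim :: "lterm \<Rightarrow> lterm \<Rightarrow> bool" where
  "open_sim M N \<longleftrightarrow> (\<forall>ps. closing ps \<and> fv M \<union> fv N \<subseteq> fst ` set ps \<longrightarrow>
     (substs ps M, substs ps N) \<in> similarity)"

lemma open_sim_refl: "open_sim M M"
  unfolding open_sim_def using fv_substs similarity_refl by (auto simp: closed_def)

text \<open>Transitivity needs the middle term closed as well, so the substitution is
  extended by a cover of its free variables (which does not affect the others).\<close>

lemma open_sim_trans:
  assumes MN: "open_sim M N" and NL: "open_sim N L"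
  shows "open_sim M L"
  unfolding open_sim_def
proof (intro allI impI)
  fix ps assume ps: "closing ps \<and> fv M \<union> fv L \<subseteq> fst ` set ps"
  define rs where "rs = ps @ cover (fv N)"
  have rs: "closing rs" "fv M \<union> fv N \<union> fv L \<subseteq> fst ` set rs"
    using ps closing_cover cover_vars[OF finite_fv] unfolding rs_def by (auto simp: image_Un)
  have "closed (substs ps M)" "closed (substs ps L)"
    using ps fv_substs unfolding closed_def by auto
  then have "substs rs M = substs ps M" "substs rs L = substs ps L"
    unfolding rs_def substs_append using substs_closed closing_cover by auto
  moreover have "(substs rs M, substs rs N) \<in> similarity" "(substs rs N, substs rs L) \<in> similarity"
    using MN NL rs unfolding open_sim_def by auto
  ultimately show "(substs ps M, substs ps L) \<in> similarity"
    using similarity_trans by metis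
qed

lemma open_sim_subst: "open_sim M N \<Longrightarrow> closed W \<Longrightarrow> open_sim (subst M x W) (subst N x W)"
  unfolding open_sim_def
proof (intro allI impI)
  fix ps assume "\<forall>ps. closing ps \<and> fv M \<union> fv N \<subseteq> fst ` set ps \<longrightarrow>
      (substs ps M, substs ps N) \<in> similarity"
    and "closed W" "closing ps \<and> fv (subst M x W) \<union> fv (subst N x W) \<subseteq> fst ` set ps"
  moreover have "closing ((x, W) # ps) \<and> fv M \<union> fv N \<subseteq> fst ` set ((x, W) # ps)"
    using calculation fv_subst_closed by auto
  ultimately show "(substs ps (subst M x W), substs ps (subst N x W)) \<in> similarity"
    by fastforce
qed

lemma similarity_open_sim: "(M, N) \<in> similarity \<Longrightarrow> open_sim M N"
  unfolding open_sim_def using similarity_closed substs_closed by metis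

lemma open_sim_cover:
  assumes "open_sim M N" "closed N"
  shows "(substs (cover (fv M)) M, N) \<in> similarity"
  using assms cover_vars[OF finite_fv] closing_cover substs_closed[OF assms(2)]
  unfolding open_sim_def closed_def by auto

lemma closed_substs_cover: "closed (substs (cover (fv M)) M)"
  using fv_substs[OF closing_cover] cover_vars[OF finite_fv] by (simp add: closed_def)

section \<open>Howe's method\<close>

text \<open>Howe's closure: the least relation that is compatible (closed under the term
  constructors) and absorbs the open extension of similarity on the right.\<close>

inductive howe :: "lterm \<Rightarrow> lterm \<Rightarrow> bool" where
  howe_Var: "open_sim (Var x) N \<Longrightarrow> howe (Var x) N"
| howe_Lam_sim: "howe M M' \<Longrightarrow> open_sim (Lam x M') N \<Longrightarrow> howe (Lam x M) N"
| howe_App_sim: "howe M1 M1' \<Longrightarrow> howe M2 M2' \<Longrightarrow> open_sim (App M1' M2') N \<Longrightarrow> howe (App M1 M2) N"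

lemma howe_refl: "howe M M"
  by (induction M) (auto intro: howe.intros open_sim_refl)

lemma howe_open_sim: "howe M N \<Longrightarrow> open_sim N L \<Longrightarrow> howe M L"
  by (induction rule: howe.cases) (auto intro: howe.intros open_sim_trans)

lemma open_sim_howe: "open_sim M N \<Longrightarrow> howe M N"
  using howe_open_sim howe_refl by blast

lemma howe_Lam: "howe M M' \<Longrightarrow> howe (Lam x M) (Lam x M')"
  by (auto intro: howe.intros open_sim_refl)

lemma howe_App: "howe M M' \<Longrightarrow> howe N N' \<Longrightarrow> howe (App M N) (App M' N')"
  by (auto intro: howe.intros open_sim_refl)

lemma howe_subst:
  assumes "howe M M'" "howe N N'" "closed N" "closed N'"
  shows "howe (subst M x N) (subst M' x N')"
  using assms(1)
proof (induction M M' rule: howe.induct)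
  case (howe_Var y L)
  have "open_sim (subst (Var y) x N') (subst L x N')"
    using open_sim_subst howe_Var assms(4) by blast
  then show ?case
    using assms(2) howe_open_sim by (cases "y = x") (auto intro: howe.intros)
next
  case (howe_Lam_sim M M' y L)
  have "open_sim (subst (Lam y M') x N') (subst L x N')"
    using open_sim_subst howe_Lam_sim assms(4) by blast
  then show ?case
    using howe_Lam_sim by (cases "y = x") (auto intro: howe.intros)
next
  case (howe_App_sim M1 M1' M2 M2' L)
  have "open_sim (subst (App M1' M2') x N') (subst L x N')"
    using open_sim_subst howe_App_sim assms(4) by blast
  then show ?case
    using howe_App_sim by (auto intro: howe.intros)
qed

lemma howe_substs: "howe M M' \<Longrightarrow> closing ps \<Longrightarrow> howe (substs ps M) (substs ps M')"
proof (induction ps arbitrary: M M')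
  case (Cons p ps)
  then show ?case by (cases p) (auto intro: howe_subst howe_refl)
qed simp

lemma howe_App_inv:
  assumes "howe (App M1 M2) N" "closed (App M1 M2)" "closed N"
  shows "\<exists>L1 L2. closed L1 \<and> closed L2 \<and> howe M1 L1 \<and> howe M2 L2 \<and> (App L1 L2, N) \<in> similarity"
proof -
  obtain L1 L2 where h: "howe M1 L1" "howe M2 L2" "open_sim (App L1 L2) N"
    using assms(1) by (cases rule: howe.cases) auto
  define ps where "ps = cover (fv (App L1 L2))"
  have "closed (substs ps (App L1 L2))"
    unfolding ps_def by (rule closed_substs_cover)
  moreover have "howe M1 (substs ps L1)" "howe M2 (substs ps L2)"
    using howe_substs[OF h(1)] howe_substs[OF h(2)] closing_cover assms(2) substs_closed
    unfolding ps_def closed_def by fastforce+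
  moreover have "(substs ps (App L1 L2), N) \<in> similarity"
    unfolding ps_def using open_sim_cover[OF h(3) assms(3)] .
  ultimately show ?thesis by (auto simp: closed_def)
qed

lemma howe_Lam_inv:
  assumes "howe (Lam x P) N" "closed (Lam x P)" "closed N"
  shows "\<exists>P'. closed (Lam x P') \<and> howe P P' \<and> (Lam x P', N) \<in> similarity"
proof -
  obtain P0 where h: "howe P P0" "open_sim (Lam x P0) N"
    using assms(1) by (cases rule: howe.cases) auto
  define ps where "ps = cover (fv (Lam x P0))"
  have vps: "fst ` set ps = fv P0 - {x}"
    unfolding ps_def using cover_vars finite_fv by simp
  then have lam: "substs ps (Lam x P0) = Lam x (substs ps P0)"
    by (intro substs_Lam) auto
  have "substs ps P = P"
    using assms(2) vps closing_cover unfolding ps_def by (intro substs_fresh) (auto simp: closed_def)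
  moreover have "howe (substs ps P) (substs ps P0)"
    using howe_substs[OF h(1) closing_cover] unfolding ps_def .
  ultimately have "howe P (substs ps P0)" by simp
  moreover have "closed (substs ps (Lam x P0))" "(substs ps (Lam x P0), N) \<in> similarity"
    unfolding ps_def using closed_substs_cover[of "Lam x P0"] open_sim_cover[OF h(2) assms(3)] by auto
  ultimately show ?thesis using lam by auto
qed

lemma howe_red: "red M M' \<Longrightarrow> closed M \<Longrightarrow> closed N \<Longrightarrow> howe M N \<Longrightarrow> howe M' N"
proof (induction arbitrary: N rule: red.induct)
  case (red_app M M' A)
  obtain L1 L2 where l: "closed L1" "closed L2" "howe M L1" "howe A L2" "(App L1 L2, N) \<in> similarity"
    using howe_App_inv[OF red_app.prems(3,1,2)] by blast
  have "howe M' L1" using red_app.IH red_app.prems(1) l by (auto simp: closed_def)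
  then show ?case using l by (auto intro: howe.intros similarity_open_sim)
next
  case (red_beta x P A)
  obtain L1 L2 where l: "closed L1" "closed L2" "howe (Lam x P) L1" "howe A L2"
      "(App L1 L2, N) \<in> similarity"
    using howe_App_inv[OF red_beta.prems(3,1,2)] by blast
  have cl: "closed (Lam x P)" "closed A" using red_beta.prems(1) by (auto simp: closed_def)
  obtain P' where p: "howe P P'" "(Lam x P', L1) \<in> similarity"
    using howe_Lam_inv[OF l(3) cl(1) l(1)] by blast
  obtain y Q where q: "reds L1 (Lam y Q)" "\<forall>W. closed W \<longrightarrow> (subst P' x W, subst Q y W) \<in> similarity"
    using similarity_step[OF p(2) reds_refl] by blast
  have "(subst Q y L2, N) \<in> similarity"
    using similarity_reds_left[OF l(5) reds_beta[OF q(1)]] .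
  then have "(subst P' x L2, N) \<in> similarity"
    using similarity_trans q(2) l(2) by blast
  moreover have "howe (subst P x A) (subst P' x L2)"
    using howe_subst[OF p(1) l(4) cl(2) l(2)] .
  ultimately show ?case using howe_open_sim similarity_open_sim by blast
qed

lemma howe_reds: "reds M M' \<Longrightarrow> closed M \<Longrightarrow> closed N \<Longrightarrow> howe M N \<Longrightarrow> howe M' N"
  unfolding reds_def
proof (induction rule: rtranclp_induct)
  case (step M' M'')
  then show ?case using howe_red reds_closed[of M M'] unfolding reds_def by blast
qed simp

lemma howe_similarity: "howe M N \<Longrightarrow> closed M \<Longrightarrow> closed N \<Longrightarrow> (M, N) \<in> similarity"
proof -
  let ?R = "{(M, N). closed M \<and> closed N \<and> howe M N}"
  have "simulation ?R"
  proof (rule simulationI)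
    fix M N x P assume "(M, N) \<in> ?R" and r: "reds M (Lam x P)"
    then have p: "closed M" "closed N" "howe M N" by auto
    have cl: "closed (Lam x P)" using reds_closed r p by blast
    obtain P' where p': "howe P P'" "(Lam x P', N) \<in> similarity"
      using howe_Lam_inv howe_reds[OF r p] cl p by blast
    obtain y Q where q: "reds N (Lam y Q)"
        "\<forall>W. closed W \<longrightarrow> (subst P' x W, subst Q y W) \<in> similarity"
      using similarity_step[OF p'(2) reds_refl] by blast
    have "(subst P x W, subst Q y W) \<in> ?R" if W: "closed W" for W
    proof -
      have "howe (subst P x W) (subst Q y W)"
        using howe_subst[OF p'(1) howe_refl W W] q(2) W howe_open_sim similarity_open_sim by blast
      then show ?thesis
        using closed_subst cl reds_closed[OF q(1) p(2)] W by blast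
    qed
    then show "\<exists>y Q. reds N (Lam y Q) \<and> (\<forall>W. closed W \<longrightarrow> (subst P x W, subst Q y W) \<in> ?R)"
      using q(1) by blast
  qed blast
  then show "howe M N \<Longrightarrow> closed M \<Longrightarrow> closed N \<Longrightarrow> (M, N) \<in> similarity"
    using simulation_similarity by blast
qed

section \<open>Similarity is a congruence\<close>

lemma howe_fill:
  "length Ms = nholes C \<Longrightarrow> length Ns = nholes C \<Longrightarrow>
   (\<forall>i < nholes C. howe (Ms ! i) (Ns ! i)) \<Longrightarrow> howe (fill C Ms) (fill C Ns)"
proof (induction C arbitrary: Ms Ns)
  case Hole
  then show ?case by (cases Ms; cases Ns) auto
next
  case (CApp C D)
  have "howe (fill C (take (nholes C) Ms)) (fill C (take (nholes C) Ns))"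
    using CApp.prems by (intro CApp.IH(1)) auto
  moreover have "howe (fill D (drop (nholes C) Ms)) (fill D (drop (nholes C) Ns))"
    using CApp.prems by (intro CApp.IH(2)) auto
  ultimately show ?case by (simp add: howe_App)
qed (simp_all add: howe_refl howe_Lam)

lemma similarity_howe: "(M, N) \<in> similarity \<Longrightarrow> howe M N"
  using open_sim_howe similarity_open_sim by blast

theorem similarity_fill:
  "length Ms = nholes C \<Longrightarrow> length Ns = nholes C \<Longrightarrow>
   (\<forall>i < nholes C. (Ms ! i, Ns ! i) \<in> similarity) \<Longrightarrow>
   closed (fill C Ms) \<Longrightarrow> closed (fill C Ns) \<Longrightarrow> (fill C Ms, fill C Ns) \<in> similarity"
  using howe_fill[of Ms C Ns] howe_similarity similarity_howe by blast

lemma similarity_plug: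
  "(M, N) \<in> similarity \<Longrightarrow> closed (plug C M) \<Longrightarrow> closed (plug C N) \<Longrightarrow>
   (plug C M, plug C N) \<in> similarity"
  unfolding plug_def by (rule similarity_fill) auto

lemma similarity_foldl_App:
  "(M, N) \<in> similarity \<Longrightarrow> \<forall>A\<in>set As. closed A \<Longrightarrow>
   (foldl App M As, foldl App N As) \<in> similarity"
proof (induction As arbitrary: M N)
  case (Cons A As)
  have "(App M A, App N A) \<in> similarity"
    using Cons.prems similarity_closed howe_App[OF similarity_howe howe_refl] howe_similarity
    by (simp add: closed_def)
  then show ?case using Cons by simp
qed simp

lemma similarity_subst_arg:
  "(P, Q) \<in> similarity \<Longrightarrow> closed (Lam x M) \<Longrightarrow> (subst M x P, subst M x Q) \<in> similarity"
  using howe_similarity[OF howe_subst[OF howe_refl similarity_howe]] similarity_closed closed_subst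
  by blast

definition eval_preorder :: "lterm rel" where
  "eval_preorder = {(M, N). closed M \<and> closed N \<and>
     (\<forall>As. (\<forall>A\<in>set As. closed A) \<longrightarrow> conv (foldl App M As) \<longrightarrow> conv (foldl App N As))}"

text \<open>The evaluation preorder is a simulation: the first argument of an evaluation
  context can be used to perform the substitution.\<close>

lemma simulation_eval_preorder: "simulation eval_preorder"
proof (rule simulationI)
  fix M N x P assume e: "(M, N) \<in> eval_preorder" and r: "reds M (Lam x P)"
  have conv_MN: "\<And>As. \<forall>A\<in>set As. closed A \<Longrightarrow> conv (foldl App M As) \<Longrightarrow> conv (foldl App N As)"
    and c: "closed M" "closed N" using e unfolding eval_preorder_def by auto
  have "conv M" using r unfolding conv_def by blast
  then obtain y Q where q: "reds N (Lam y Q)" using conv_MN[of "[]"] by (auto simp: conv_def)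
  have "(subst P x W, subst Q y W) \<in> eval_preorder" if W: "closed W" for W
  proof -
    have "conv (foldl App (subst Q y W) As)"
      if As: "\<forall>A\<in>set As. closed A" "conv (foldl App (subst P x W) As)" for As
    proof -
      have "conv (foldl App M (W # As))"
        using conv_reds_iff[OF reds_foldl_App[OF reds_beta[OF r]]] As(2) by simp
      then have "conv (foldl App N (W # As))" using conv_MN[of "W # As"] As W by simp
      then show ?thesis
        using conv_reds_iff[OF reds_foldl_App[OF reds_beta[OF q]]] by simp
    qed
    then show ?thesis
      using closed_subst reds_closed r q c W unfolding eval_preorder_def by blast
  qed
  then show "\<exists>y Q. reds N (Lam y Q) \<and> (\<forall>W. closed W \<longrightarrow> (subst P x W, subst Q y W) \<in> eval_preorder)"
    using q by blast
qed (simp add: eval_preorder_def)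

lemma eval_preorder_eq: "eval_preorder = similarity"
proof
  show "eval_preorder \<subseteq> similarity"
    using simulation_eval_preorder by (rule simulation_similarity)
  show "similarity \<subseteq> eval_preorder"
    unfolding eval_preorder_def using similarity_closed similarity_foldl_App similarity_conv by blast
qed

lemma eval_equiv_mutual_sim:
  "eval_equiv = {(M, N). (M, N) \<in> similarity \<and> (N, M) \<in> similarity}"
  unfolding eval_preorder_eq[symmetric] eval_equiv_def eval_preorder_def by auto

lemma eval_equiv_sym: "(M, N) \<in> eval_equiv \<Longrightarrow> (N, M) \<in> eval_equiv"
  unfolding eval_equiv_mutual_sim by auto

lemma eval_equiv_converse: "eval_equiv\<inverse> = eval_equiv"
  using eval_equiv_sym by auto

lemma eval_equiv_trans: "(M, N) \<in> eval_equiv \<Longrightarrow> (N, L) \<in> eval_equiv \<Longrightarrow> (M, L) \<in> eval_equiv"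
  unfolding eval_equiv_mutual_sim using similarity_trans by auto

lemma eval_equiv_closed: "(M, N) \<in> eval_equiv \<Longrightarrow> closed M \<and> closed N"
  unfolding eval_equiv_def by auto

lemma eval_equiv_reds: "reds M M' \<Longrightarrow> closed M \<Longrightarrow> (M, M') \<in> eval_equiv"
  unfolding eval_equiv_mutual_sim using similarity_reds by blast

text \<open>By determinism, mutual similarity is itself a simulation.\<close>

lemma eval_equiv_step:
  assumes "(M, N) \<in> eval_equiv" "reds M (Lam x P)"
  shows "\<exists>y Q. reds N (Lam y Q) \<and> (\<forall>W. closed W \<longrightarrow> (subst P x W, subst Q y W) \<in> eval_equiv)"
proof -
  have s: "(M, N) \<in> similarity" "(N, M) \<in> similarity"
    using assms(1) unfolding eval_equiv_mutual_sim by auto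
  obtain y Q where q: "reds N (Lam y Q)"
      "\<forall>W. closed W \<longrightarrow> (subst P x W, subst Q y W) \<in> similarity"
    using similarity_step[OF s(1) assms(2)] by blast
  obtain x' P' where q': "reds M (Lam x' P')"
      "\<forall>W. closed W \<longrightarrow> (subst Q y W, subst P' x' W) \<in> similarity"
    using similarity_step[OF s(2) q(1)] by blast
  have "x' = x" "P' = P" using Lam_unique[OF assms(2) q'(1)] by auto
  then show ?thesis using q q' unfolding eval_equiv_mutual_sim by auto
qed

lemma app_bisim_iff: "app_bisim R \<longleftrightarrow> simulation R \<and> simulation (R\<inverse>)"
  unfolding app_bisim_def simulation_def rel_on_closed_def by fast

lemma app_bisimilar_eq_eval_equiv: "app_bisimilar = eval_equiv"
proof
  show "app_bisimilar \<subseteq> eval_equiv"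
    unfolding app_bisimilar_def app_bisim_iff eval_equiv_mutual_sim
    using simulation_similarity by blast
  have "simulation eval_equiv"
    using eval_equiv_step eval_equiv_closed by (intro simulationI)
  then have "app_bisim eval_equiv"
    unfolding app_bisim_iff eval_equiv_converse by simp
  then show "eval_equiv \<subseteq> app_bisimilar"
    unfolding app_bisimilar_def by blast
qed

fun term_ctx :: "lterm \<Rightarrow> ctx" where
  "term_ctx (Var x) = CVar x"
| "term_ctx (App M N) = CApp (term_ctx M) (term_ctx N)"
| "term_ctx (Lam x M) = CLam x (term_ctx M)"

lemma nholes_term_ctx [simp]: "nholes (term_ctx A) = 0"
  by (induction A) auto

lemma fill_term_ctx [simp]: "fill (term_ctx A) Ms = A"
  by (induction A arbitrary: Ms) auto

definition eval_ctx :: "lterm list \<Rightarrow> ctx" where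
  "eval_ctx As = foldl (\<lambda>C A. CApp C (term_ctx A)) Hole As"

lemma plug_eval_ctx: "plug (eval_ctx As) M = foldl App M As"
proof -
  have "plug (foldl (\<lambda>C A. CApp C (term_ctx A)) C0 As) M = foldl App (plug C0 M) As" for C0
    by (induction As arbitrary: C0) (auto simp: plug_def)
  then show ?thesis unfolding eval_ctx_def by (simp add: plug_def)
qed

lemma ctx_equiv_eq_eval_equiv: "ctx_equiv = eval_equiv"
proof
  show "ctx_equiv \<subseteq> eval_equiv"
  proof
    fix p assume p: "p \<in> ctx_equiv"
    then obtain M N where MN: "p = (M, N)" "closed M" "closed N"
      unfolding ctx_equiv_def by auto
    have "conv (foldl App M As) \<longleftrightarrow> conv (foldl App N As)" if "\<forall>A\<in>set As. closed A" for As
    proof -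
      have "closed (plug (eval_ctx As) M)" "closed (plug (eval_ctx As) N)"
        using MN that by (auto simp: plug_eval_ctx closed_def fv_foldl_App)
      then have "conv (plug (eval_ctx As) M) \<longleftrightarrow> conv (plug (eval_ctx As) N)"
        using p MN unfolding ctx_equiv_def by blast
      then show ?thesis by (simp add: plug_eval_ctx)
    qed
    then show "p \<in> eval_equiv" using MN unfolding eval_equiv_def by auto
  qed
  show "eval_equiv \<subseteq> ctx_equiv"
  proof (clarify)
    fix M N assume "(M, N) \<in> eval_equiv"
    then have s: "(M, N) \<in> similarity" "(N, M) \<in> similarity"
      unfolding eval_equiv_mutual_sim by auto
    have "conv (plug C M) \<longleftrightarrow> conv (plug C N)"
      if "closed (plug C M)" "closed (plug C N)" for C
      using similarity_plug[OF s(1)] similarity_plug[OF s(2)] that similarity_conv by blast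
    then show "(M, N) \<in> ctx_equiv"
      using s similarity_closed unfolding ctx_equiv_def by auto
  qed
qed

section \<open>Coupled logical bisimulations\<close>

text \<open>The clauses of a coupled logical bisimulation for the left-hand term; the
  clauses for the right-hand term are the same ones for the converse relations.\<close>

definition lb_forward :: "lterm rel \<Rightarrow> lterm rel \<Rightarrow> lterm \<Rightarrow> lterm \<Rightarrow> bool" where
  "lb_forward R1 R2 M N \<longleftrightarrow>
      (\<forall>M'. red M M' \<longrightarrow> (\<exists>N'. reds N N' \<and> (M', N') \<in> R2)) \<and>
      (\<forall>x M'. M = Lam x M' \<longrightarrow> (\<exists>y N'. reds N (Lam y N') \<and>
          (\<forall>P Q. closed P \<and> closed Q \<and> (P, Q) \<in> ctx_closure R1 \<longrightarrow>
             (subst M' x P, subst N' y Q) \<in> R2)))"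

lemma ctx_closure_converse: "ctx_closure (R\<inverse>) = (ctx_closure R)\<inverse>"
  unfolding ctx_closure_def by fast

lemma lb_forward_converse:
  "lb_forward (R1\<inverse>) (R2\<inverse>) N M \<longleftrightarrow>
      (\<forall>N'. red N N' \<longrightarrow> (\<exists>M'. reds M M' \<and> (M', N') \<in> R2)) \<and>
      (\<forall>y N'. N = Lam y N' \<longrightarrow> (\<exists>x M'. reds M (Lam x M') \<and>
          (\<forall>P Q. closed P \<and> closed Q \<and> (P, Q) \<in> ctx_closure R1 \<longrightarrow>
             (subst M' x P, subst N' y Q) \<in> R2)))"
  unfolding lb_forward_def ctx_closure_converse by blast

lemma coupled_lb_iff:
  "coupled_lb R1 R2 \<longleftrightarrow> rel_on_closed R1 \<and> rel_on_closed R2 \<and> R1 \<subseteq> R2 \<and>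
     (\<forall>(M, N)\<in>R2. lb_forward R1 R2 M N \<and> lb_forward (R1\<inverse>) (R2\<inverse>) N M)"
  unfolding lb_forward_converse unfolding coupled_lb_def lb_forward_def by auto

lemma coupled_lb_rel_on_closed: "coupled_lb R1 R2 \<Longrightarrow> rel_on_closed R2"
  unfolding coupled_lb_def by (elim conjE)

lemma coupled_lb_subset: "coupled_lb R1 R2 \<Longrightarrow> R1 \<subseteq> R2"
  unfolding coupled_lb_def by (elim conjE)

lemma coupled_lb_forward: "coupled_lb R1 R2 \<Longrightarrow> (M, N) \<in> R2 \<Longrightarrow> lb_forward R1 R2 M N"
  unfolding coupled_lb_iff by auto

lemma coupled_lb_converse: "coupled_lb R1 R2 \<Longrightarrow> coupled_lb (R1\<inverse>) (R2\<inverse>)"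
  unfolding coupled_lb_iff rel_on_closed_def by auto

lemma coupled_lb_reds:
  assumes lb: "coupled_lb R1 R2" and "reds M M'" "(M, N) \<in> R2"
  shows "\<exists>N'. reds N N' \<and> (M', N') \<in> R2"
  using assms(2,3) unfolding reds_def
proof (induction rule: rtranclp_induct)
  case (step M1 M2)
  then obtain N1 where "reds N N1" "(M1, N1) \<in> R2" unfolding reds_def by blast
  moreover from this obtain N2 where "reds N1 N2" "(M2, N2) \<in> R2"
    using coupled_lb_forward[OF lb] step.hyps(2) unfolding lb_forward_def by blast
  ultimately show ?case using reds_trans unfolding reds_def by blast
qed auto

lemma ctx_closure_refl: "closed W \<Longrightarrow> (W, W) \<in> ctx_closure R"
  unfolding ctx_closure_def
  by (intro CollectI exI[of _ "term_ctx W"] exI[of _ "[]"]) simp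

lemma coupled_lb_simulation:
  assumes lb: "coupled_lb R1 R2"
  shows "simulation R2"
proof (rule simulationI)
  fix M N assume "(M, N) \<in> R2"
  then show "closed M \<and> closed N"
    using coupled_lb_rel_on_closed[OF lb] unfolding rel_on_closed_def by auto
next
  fix M N x P assume "(M, N) \<in> R2" "reds M (Lam x P)"
  then obtain N1 where n1: "reds N N1" "(Lam x P, N1) \<in> R2"
    using coupled_lb_reds[OF lb] by blast
  then obtain y Q where "reds N1 (Lam y Q)" "\<forall>P0 Q0. closed P0 \<and> closed Q0 \<and>
      (P0, Q0) \<in> ctx_closure R1 \<longrightarrow> (subst P x P0, subst Q y Q0) \<in> R2"
    using coupled_lb_forward[OF lb n1(2)] unfolding lb_forward_def by blast
  then show "\<exists>y Q. reds N (Lam y Q) \<and> (\<forall>W. closed W \<longrightarrow> (subst P x W, subst Q y W) \<in> R2)"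
    using reds_trans n1(1) ctx_closure_refl by blast
qed

lemma coupled_lb_app_bisim: "coupled_lb R1 R2 \<Longrightarrow> app_bisim R2"
  unfolding app_bisim_iff using coupled_lb_simulation coupled_lb_converse by blast

lemma lb2_subset_app_bisimilar: "lb2 \<subseteq> app_bisimilar"
  unfolding lb2_def app_bisimilar_def using coupled_lb_app_bisim by blast

lemma lb1_subset_lb2: "lb1 \<subseteq> lb2"
  unfolding lb1_def lb2_def using coupled_lb_subset by blast

lemma ctx_closure_similarity:
  assumes "(P, Q) \<in> ctx_closure eval_equiv"
  shows "(P, Q) \<in> similarity"
proof -
  obtain C Ms Ns where c: "P = fill C Ms" "Q = fill C Ns" "length Ms = nholes C" "length Ns = nholes C"
      "\<forall>i < nholes C. (Ms ! i, Ns ! i) \<in> eval_equiv" "closed (fill C Ms)" "closed (fill C Ns)"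
    using assms unfolding ctx_closure_def by blast
  then have "\<forall>i < nholes C. (Ms ! i, Ns ! i) \<in> similarity"
    unfolding eval_equiv_mutual_sim by blast
  then show ?thesis using similarity_fill c by blast
qed

text \<open>Conversely, evaluation equivalence satisfies the clauses: it is closed under
  reduction, and by congruence it can absorb contextually related arguments.\<close>

lemma lb_forward_eval_equiv:
  assumes e: "(M, N) \<in> eval_equiv"
  shows "lb_forward eval_equiv eval_equiv M N"
  unfolding lb_forward_def
proof (intro conjI allI impI)
  fix M' assume "red M M'"
  then have "(M', N) \<in> eval_equiv"
    using eval_equiv_reds[OF red_reds] e eval_equiv_closed eval_equiv_sym eval_equiv_trans by blast
  then show "\<exists>N'. reds N N' \<and> (M', N') \<in> eval_equiv" using reds_refl by blast
next
  fix x M' assume M: "M = Lam x M'"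
  obtain y Q where q: "reds N (Lam y Q)"
      "\<forall>W. closed W \<longrightarrow> (subst M' x W, subst Q y W) \<in> eval_equiv"
    using eval_equiv_step[OF e[unfolded M] reds_refl] by blast
  have "(subst M' x P, subst Q y R) \<in> eval_equiv"
    if PR: "closed P" "closed R" "(P, R) \<in> ctx_closure eval_equiv" for P R
  proof -
    have "(R, P) \<in> ctx_closure eval_equiv"
      using PR(3) ctx_closure_converse[of eval_equiv] unfolding eval_equiv_converse by auto
    then have "(P, R) \<in> similarity" "(R, P) \<in> similarity"
      using PR(3) ctx_closure_similarity by auto
    then have "(subst M' x P, subst M' x R) \<in> eval_equiv"
      using similarity_subst_arg e M eval_equiv_closed unfolding eval_equiv_mutual_sim by blast
    then show ?thesis using eval_equiv_trans q(2) PR(2) by blast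
  qed
  then show "\<exists>y N'. reds N (Lam y N') \<and> (\<forall>P Q. closed P \<and> closed Q \<and>
      (P, Q) \<in> ctx_closure eval_equiv \<longrightarrow> (subst M' x P, subst N' y Q) \<in> eval_equiv)"
    using q(1) by blast
qed

lemma eval_equiv_subset_lb1: "eval_equiv \<subseteq> lb1"
proof -
  have "rel_on_closed eval_equiv"
    unfolding rel_on_closed_def using eval_equiv_closed by auto
  moreover have "\<forall>(M, N)\<in>eval_equiv.
      lb_forward eval_equiv eval_equiv M N \<and> lb_forward eval_equiv eval_equiv N M"
    using lb_forward_eval_equiv eval_equiv_sym by auto
  ultimately have "coupled_lb eval_equiv eval_equiv"
    unfolding coupled_lb_iff eval_equiv_converse by simp
  then show ?thesis unfolding lb1_def by blast
qed

theorem mainTheorem10: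
  shows "app_bisimilar = lb2 \<and> lb2 = eval_equiv \<and> eval_equiv = ctx_equiv \<and> ctx_equiv = lb1"
proof -
  text \<open>The cycle of inclusions eval_equiv, lb1, lb2, app_bisimilar, eval_equiv.\<close>
  have "lb1 = eval_equiv" "lb2 = eval_equiv"
    using eval_equiv_subset_lb1 lb1_subset_lb2 lb2_subset_app_bisimilar
      app_bisimilar_eq_eval_equiv by auto
  then show ?thesis
    using app_bisimilar_eq_eval_equiv ctx_equiv_eq_eval_equiv by simp
qed

end
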